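(* Let $\mathcal{H}$ be a complex Hilbert space and $B,C\in\mathcal{B}(\mathcal{H})$. If $|B||C^*|=|B^*||C|=0$, then $$w^2\left(\begin{bmatrix}0 & B\\ C & 0\end{bmatrix}\right)=\frac14\max\left\{\big\||B|^2+|C^*|^2\big\|,\ \big\||B^*|^2+|C|^2\big\|\right\}.$$
   Context: $\mathcal{B}(\mathcal{H})$ is the algebra of bounded linear operators on $\mathcal{H}$ with operator norm $\|\cdot\|$. For $A\in\mathcal{B}(\mathcal{H})$, $A^*$ is the adjoint, $|A|=(A^*A)^{1/2}$, $|A^*|=(AA^* )^{1/2}$, and $w(A)=\sup_{\|x\|=1}|\langle Ax,x\rangle|$ is the numerical radius. The operator matrix $\begin{bmatrix}A&B\\C&D\end{bmatrix}$ acts on $\mathcal{H}\oplus\mathcal{H}$ by $(x_1,x_2)\mapsto(Ax_1+Bx_2,\,Cx_1+Dx_2)$; $0$ denotes the zero operator. *)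

theory Defs
  imports "HOL-Analysis.Analysis"
begin

text \<open>Convention: the inner product is conjugate-linear in the first and linear in the
second argument.\<close>

class complex_vector = real_vector +
  fixes scaleC :: "complex \<Rightarrow> 'a \<Rightarrow> 'a"
  assumes scaleC_add_right: "scaleC a (x + y) = scaleC a x + scaleC a y"
    and scaleC_add_left: "scaleC (a + b) x = scaleC a x + scaleC b x"
    and scaleC_scaleC: "scaleC a (scaleC b x) = scaleC (a * b) x"
    and scaleC_one: "scaleC 1 x = x"
    and scaleR_scaleC: "scaleR r x = scaleC (complex_of_real r) x"

class complex_inner = complex_vector + real_normed_vector +
  fixes cinner :: "'a \<Rightarrow> 'a \<Rightarrow> complex"
  assumes cinner_commute: "cinner x y = cnj (cinner y x)"
    and cinner_add_left: "cinner (x + y) z = cinner x z + cinner y z"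
    and cinner_scaleC_left: "cinner (scaleC r x) y = cnj r * cinner x y"
    and cinner_nonneg: "Im (cinner x x) = 0 \<and> 0 \<le> Re (cinner x x)"
    and cinner_eq_zero_iff: "cinner x x = 0 \<longleftrightarrow> x = 0"
    and norm_eq_sqrt_cinner: "norm x = sqrt (Re (cinner x x))"

class chilbert_space = complex_inner + complete_space

definition bounded_clinear :: "('a::complex_inner \<Rightarrow> 'b::complex_inner) \<Rightarrow> bool" where
  "bounded_clinear f \<longleftrightarrow>
     (\<forall>x y. f (x + y) = f x + f y) \<and> (\<forall>c x. f (scaleC c x) = scaleC c (f x)) \<and>
     (\<exists>K. \<forall>x. norm (f x) \<le> norm x * K)"

definition adj :: "('a::complex_inner \<Rightarrow> 'a) \<Rightarrow> ('a \<Rightarrow> 'a)" where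
  "adj T = (THE S. bounded_clinear S \<and> (\<forall>x y. cinner (T x) y = cinner x (S y)))"

definition positive_op :: "('a::complex_inner \<Rightarrow> 'a) \<Rightarrow> bool" where
  "positive_op P \<longleftrightarrow> bounded_clinear P \<and>
     (\<forall>x. Im (cinner (P x) x) = 0 \<and> 0 \<le> Re (cinner (P x) x))"

definition opabs :: "('a::complex_inner \<Rightarrow> 'a) \<Rightarrow> ('a \<Rightarrow> 'a)" where
  "opabs T = (THE P. positive_op P \<and> P \<circ> P = adj T \<circ> T)"

definition opmat2 :: "('a \<Rightarrow> 'a::complex_inner) \<Rightarrow> ('a \<Rightarrow> 'a) \<Rightarrow> ('a \<Rightarrow> 'a) \<Rightarrow> ('a \<Rightarrow> 'a)
    \<Rightarrow> ('a \<times> 'a \<Rightarrow> 'a \<times> 'a)" where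
  "opmat2 A B C D = (\<lambda>(x1, x2). (A x1 + B x2, C x1 + D x2))"

definition dsum_inner :: "'a::complex_inner \<times> 'a \<Rightarrow> 'a \<times> 'a \<Rightarrow> complex" where
  "dsum_inner x y = cinner (fst x) (fst y) + cinner (snd x) (snd y)"

definition dsum_norm :: "'a::complex_inner \<times> 'a \<Rightarrow> real" where
  "dsum_norm x = sqrt ((norm (fst x))\<^sup>2 + (norm (snd x))\<^sup>2)"

text \<open>Numerical radius of an operator on \<open>H \<oplus> H\<close>:
  \<open>w(T) = sup {|\<langle>Tx,x\<rangle>| : \<parallel>x\<parallel> = 1}\<close>; 0 is added to the set so that the
  (degenerate) zero space gets \<open>w = 0\<close>; otherwise this does not change the supremum.\<close>
definition numrad2 :: "('a::complex_inner \<times> 'a \<Rightarrow> 'a \<times> 'a) \<Rightarrow> real" where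
  "numrad2 T = Sup (insert 0 ((\<lambda>x. cmod (dsum_inner (T x) x)) ` {x. dsum_norm x = 1}))"

end

(*
  The hypotheses |B||C^*| = 0 and |B^*||C| = 0 force B C = 0 and C B = 0. Then the two summands
  of |B|^2 + |C^*|^2 = B^* B + C C^* have orthogonal ranges, which makes its norm equal to
  max(||B||, ||C||)^2; the same holds for |B^*|^2 + |C|^2. For the off-diagonal matrix T one has
  <T(x1,x2),(x1,x2)> = <B x2, x1> + <C x1, x2>, and since B x2 is orthogonal to C^* x2 this is at
  most max(||B||, ||C||) ||x1|| ||x2|| <= max(||B||, ||C||)/2 on the unit sphere, while suitable
  unit vectors attain ||B x||/(2||x||) and ||C x||/(2||x||). Hence w(T) = max(||B||, ||C||)/2.

  Since |T| is characterised as the unique positive square root of T^* T, its existence has to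
  be established: adjoints come from the Riesz representation theorem, proved with a
  norm-attaining unit vector, and for a hermitian contraction R the positive square root of
  1 - R is 1 - sum c_n R^n, with c_n the Taylor coefficients of 1 - sqrt (1 - t).
*)

theory Submission
  imports Defs
begin

lemma real_le_of_power2_le_mult: "a\<^sup>2 \<le> a * b \<Longrightarrow> 0 \<le> b \<Longrightarrow> a \<le> (b::real)"
  by (cases "a > 0") (auto simp: power2_eq_square)

lemma cnj_sgn_mult: "cnj (sgn z) * z = of_real (cmod z)"
proof (cases "z = 0")
  case False
  have "cnj z * z = of_real (cmod z) * of_real (cmod z)"
    by (simp add: mult.commute power2_eq_square flip: complex_norm_square)
  with False show ?thesis
    by (simp add: sgn_eq)
qed simp

interpretation scaleC_right: additive "(\<lambda>x. scaleC a x :: 'a::complex_vector)"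
  by unfold_locales (rule scaleC_add_right)

declare scaleC_right.zero [simp]

lemma cinner_add_right: "cinner x (y + z) = cinner x y + cinner x (z::'a::complex_inner)"
  by (subst (1 2 3) cinner_commute) (simp add: cinner_add_left)

lemma cinner_scaleC_right: "cinner x (scaleC r y) = r * cinner x (y::'a::complex_inner)"
  by (subst (1 2) cinner_commute) (simp add: cinner_scaleC_left)

interpretation cinner_left: additive "(\<lambda>x. cinner x y :: complex)" for y :: "'a::complex_inner"
  by unfold_locales (rule cinner_add_left)

interpretation cinner_right: additive "(\<lambda>y. cinner x y :: complex)" for x :: "'a::complex_inner"
  by unfold_locales (rule cinner_add_right)

declare cinner_left.zero [simp] cinner_right.zero [simp]

lemma cinner_scaleR_left: "cinner (r *\<^sub>R x) (y::'a::complex_inner) = of_real r * cinner x y"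
  by (simp add: scaleR_scaleC cinner_scaleC_left)

lemma cinner_scaleR_right: "cinner x (r *\<^sub>R y::'a::complex_inner) = of_real r * cinner x y"
  by (simp add: scaleR_scaleC cinner_scaleC_right)

lemma cinner_self: "cinner x x = complex_of_real ((norm (x::'a::complex_inner))\<^sup>2)"
  using cinner_nonneg[of x] by (simp add: norm_eq_sqrt_cinner complex_eq_iff)

lemma Re_cinner_self: "Re (cinner x x) = (norm (x::'a::complex_inner))\<^sup>2"
  by (simp add: cinner_self del: of_real_power)

lemma cinner_ext_left: "(\<And>z. cinner x z = cinner y z) \<Longrightarrow> x = (y::'a::complex_inner)"
  by (metis cinner_left.diff cinner_eq_zero_iff right_minus_eq)

lemma cinner_ext_right: "(\<And>z. cinner z x = cinner z y) \<Longrightarrow> x = (y::'a::complex_inner)"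
  by (metis cinner_right.diff cinner_eq_zero_iff right_minus_eq)

lemma norm_scaleC: "norm (scaleC a x) = cmod a * norm (x::'a::complex_inner)"
proof -
  have "complex_of_real ((norm (scaleC a x))\<^sup>2) = complex_of_real ((cmod a * norm x)\<^sup>2)"
    by (simp add: cinner_self [symmetric] cinner_scaleC_left cinner_scaleC_right
        complex_norm_square power_mult_distrib mult.commute del: of_real_power)
  then have "(norm (scaleC a x))\<^sup>2 = (cmod a * norm x)\<^sup>2"
    by (simp only: of_real_eq_iff)
  then show ?thesis
    by (simp add: power2_eq_iff_nonneg)
qed

lemma power2_norm_add:
  "(norm (x + y))\<^sup>2 = (norm x)\<^sup>2 + (norm y)\<^sup>2 + 2 * Re (cinner x (y::'a::complex_inner))"
proof -
  have "cinner (x + y) (x + y) = cinner x x + cinner y y + (cinner x y + cnj (cinner x y))"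
    by (simp add: cinner_add_left cinner_add_right cinner_commute [of y x])
  then show ?thesis
    by (simp add: cinner_self complex_add_cnj del: of_real_power flip: of_real_add of_real_mult)
qed

lemma power2_norm_diff:
  "(norm (x - y))\<^sup>2 = (norm x)\<^sup>2 + (norm y)\<^sup>2 - 2 * Re (cinner x (y::'a::complex_inner))"
  using power2_norm_add [of x "- y"] by (simp add: cinner_right.minus)

lemma norm_cinner_le: "cmod (cinner x y) \<le> norm x * norm (y::'a::complex_inner)"
proof (cases "y = 0")
  case False
  define a where "a = cinner y x"
  define n where "n = (norm y)\<^sup>2"
  have "n > 0"
    using False by (simp add: n_def)
  define t where "t = a / of_real n"
  have "cinner x (scaleC t y) = of_real ((cmod a)\<^sup>2 / n)"
    by (simp add: cinner_scaleC_right cinner_commute [of x y] t_def a_def [symmetric]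
        complex_norm_square del: of_real_power)
  moreover have "(norm (scaleC t y))\<^sup>2 = (cmod a)\<^sup>2 / n"
    using \<open>n > 0\<close> by (simp add: norm_scaleC t_def norm_divide power_divide power_mult_distrib
        n_def [symmetric]) (simp add: power2_eq_square)
  ultimately have "(norm (x - scaleC t y))\<^sup>2 = (norm x)\<^sup>2 - (cmod a)\<^sup>2 / n"
    by (simp add: power2_norm_diff del: of_real_power)
  then have "(cmod a)\<^sup>2 / n \<le> (norm x)\<^sup>2"
    by (metis diff_ge_0_iff_ge zero_le_power2)
  then have "(cmod a)\<^sup>2 \<le> (norm x * norm y)\<^sup>2"
    using \<open>n > 0\<close> by (simp add: n_def power_mult_distrib field_simps)
  then show ?thesis
    by (simp add: a_def cinner_commute [of x y] power2_le_iff_abs_le)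
qed simp

lemma bounded_linear_cinner_right: "bounded_linear (cinner (x::'a::complex_inner))"
  by (rule bounded_linear_intro [of _ "norm x"])
    (auto simp: cinner_add_right cinner_scaleR_right scaleR_conv_of_real mult.commute
      norm_cinner_le [of x, THEN order_trans])

lemma bounded_linear_cinner_left: "bounded_linear (\<lambda>x. cinner x (y::'a::complex_inner))"
  by (rule bounded_linear_intro [of _ "norm y"])
    (auto simp: cinner_add_left cinner_scaleR_left scaleR_conv_of_real norm_cinner_le)

lemma bounded_clinear_iff:
  "bounded_clinear f \<longleftrightarrow> bounded_linear f \<and> (\<forall>c x. f (scaleC c x) = scaleC c (f x))"
proof
  assume f: "bounded_clinear f"
  then obtain K where "\<And>x. norm (f x) \<le> norm x * K"
    by (auto simp: bounded_clinear_def)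
  with f show "bounded_linear f \<and> (\<forall>c x. f (scaleC c x) = scaleC c (f x))"
    by (auto intro!: bounded_linear_intro simp: bounded_clinear_def scaleR_scaleC)
next
  assume "bounded_linear f \<and> (\<forall>c x. f (scaleC c x) = scaleC c (f x))"
  then show "bounded_clinear f"
    by (auto simp: bounded_clinear_def linear_simps dest: bounded_linear.bounded)
qed

lemma bounded_clinear_imp_bounded_linear: "bounded_clinear f \<Longrightarrow> bounded_linear f"
  by (simp add: bounded_clinear_iff)

lemma bounded_clinear_simps:
  assumes "bounded_clinear f"
  shows "f (x + y) = f x + f y" "f (x - y) = f x - f y" "f 0 = 0" "f (- x) = - f x"
    "f (r *\<^sub>R x) = r *\<^sub>R f x" "f (scaleC c x) = scaleC c (f x)"
  using assms by (auto simp: bounded_clinear_iff linear_simps)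

lemma bounded_clinear_onorm: "bounded_clinear f \<Longrightarrow> norm (f x) \<le> onorm f * norm x"
  by (simp add: bounded_clinear_imp_bounded_linear onorm)

lemma onorm_nonneg_clinear: "bounded_clinear f \<Longrightarrow> 0 \<le> onorm f"
  by (simp add: bounded_clinear_imp_bounded_linear onorm_pos_le)

lemma bounded_clinear_ident: "bounded_clinear (\<lambda>x. x)"
  by (simp add: bounded_clinear_iff)

lemma bounded_clinear_compose:
  "bounded_clinear f \<Longrightarrow> bounded_clinear g \<Longrightarrow> bounded_clinear (\<lambda>x. f (g x))"
  by (simp add: bounded_clinear_iff bounded_linear_compose)

lemma bounded_clinear_add:
  "bounded_clinear f \<Longrightarrow> bounded_clinear g \<Longrightarrow> bounded_clinear (\<lambda>x. f x + g x)"
  by (simp add: bounded_clinear_iff bounded_linear_add scaleC_add_right)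

lemma bounded_clinear_diff:
  "bounded_clinear f \<Longrightarrow> bounded_clinear g \<Longrightarrow> bounded_clinear (\<lambda>x. f x - g x)"
  by (simp add: bounded_clinear_iff bounded_linear_sub scaleC_right.diff)

lemma bounded_clinear_scaleR:
  assumes "bounded_clinear f"
  shows "bounded_clinear (\<lambda>x. r *\<^sub>R f x)"
  using assms
    bounded_linear_compose [OF bounded_linear_scaleR_right bounded_clinear_imp_bounded_linear [OF assms]]
  by (simp add: bounded_clinear_iff scaleR_scaleC scaleC_scaleC mult.commute)

lemma bounded_linear_scaleC: "bounded_linear (scaleC c :: 'a::complex_inner \<Rightarrow> 'a)"
  by (rule bounded_linear_intro [of _ "cmod c"])
    (simp_all add: scaleC_add_right scaleR_scaleC scaleC_scaleC mult.commute norm_scaleC)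

lemma onorm_le_sqrt_if_power2_le:
  assumes "0 \<le> c" and "\<And>x. (norm (f x))\<^sup>2 \<le> c * (norm x)\<^sup>2"
  shows "onorm f \<le> sqrt c"
proof (rule onorm_bound)
  show "norm (f x) \<le> sqrt c * norm x" for x
  proof (rule power2_le_imp_le)
    show "(norm (f x))\<^sup>2 \<le> (sqrt c * norm x)\<^sup>2"
      using assms by (simp add: power_mult_distrib)
  qed (simp add: assms(1))
qed (simp add: assms(1))

section \<open>The Riesz representation theorem and adjoints\<close>

lemma exists_unit_vector_real_value_gt:
  fixes g :: "'a::complex_inner \<Rightarrow> complex"
  assumes g: "bounded_linear g" and g_scaleC: "\<And>c x. g (scaleC c x) = c * g x"
    and e: "0 < e" "e \<le> onorm g"
  shows "\<exists>x. norm x = 1 \<and> Im (g x) = 0 \<and> onorm g - e < Re (g x)"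
proof -
  have "\<exists>v. (onorm g - e) * norm v < cmod (g v)"
  proof (rule ccontr)
    assume "\<nexists>v. (onorm g - e) * norm v < cmod (g v)"
    then have "onorm g \<le> onorm g - e"
      using e by (intro onorm_bound) (auto simp: not_less)
    with e show False
      by simp
  qed
  then obtain v where v: "(onorm g - e) * norm v < cmod (g v)"
    by blast
  moreover have "0 \<le> (onorm g - e) * norm v"
    using e by simp
  ultimately have "g v \<noteq> 0"
    by auto
  then have "v \<noteq> 0"
    using g by (auto simp: linear_simps)
  define x where "x = scaleC (cnj (sgn (g v))) (inverse (norm v) *\<^sub>R v)"
  have "g x = of_real (cmod (g v) / norm v)"
    by (simp add: x_def g_scaleC linear_simps(5) [OF g] scaleR_conv_of_real mult.left_commute
        cnj_sgn_mult divide_inverse)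
  moreover have "norm x = 1"
    using \<open>v \<noteq> 0\<close> \<open>g v \<noteq> 0\<close> by (simp add: x_def norm_scaleC norm_sgn)
  moreover have "onorm g - e < cmod (g v) / norm v"
    using v \<open>v \<noteq> 0\<close> by (simp add: field_simps)
  ultimately show ?thesis
    by auto
qed

lemma power2_norm_diff_unit_le:
  fixes x y :: "'a::complex_inner"
  assumes "norm x = 1" "norm y = 1" "0 \<le> 2 - \<delta>" "2 - \<delta> \<le> norm (x + y)"
  shows "(norm (x - y))\<^sup>2 \<le> 4 * \<delta>"
proof -
  have "(norm (x - y))\<^sup>2 = 4 - (norm (x + y))\<^sup>2"
    using power2_norm_add [of x y] power2_norm_diff [of x y] assms(1,2) by simp
  also have "(2 - \<delta>)\<^sup>2 \<le> (norm (x + y))\<^sup>2"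
    using assms(4,3) by (rule power_mono)
  then have "4 - (norm (x + y))\<^sup>2 \<le> 4 * \<delta> - \<delta>\<^sup>2"
    by (simp add: power2_eq_square algebra_simps)
  finally show ?thesis
    using zero_le_power2 [of \<delta>] by linarith
qed

lemma maximizing_unit_sequence_Cauchy:
  fixes g :: "'a::complex_inner \<Rightarrow> complex"
  assumes g: "bounded_linear g" and g_pos: "0 < onorm g"
    and xs: "\<And>n. norm (xs n) = 1" "\<And>n. onorm g - onorm g / Suc n < Re (g (xs n))"
  shows "Cauchy xs"
proof (rule metric_CauchyI)
  fix e :: real
  assume "0 < e"
  define M where "M = onorm g"
  have close: "(norm (xs m - xs n))\<^sup>2 \<le> 4 * (1 / Suc m + 1 / Suc n)" for m n
  proof (rule power2_norm_diff_unit_le [OF xs(1) xs(1)])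
    have "M * (2 - (1 / Suc m + 1 / Suc n)) < Re (g (xs m)) + Re (g (xs n))"
      using xs(2) [of m] xs(2) [of n] by (simp add: M_def algebra_simps)
    also have "\<dots> \<le> cmod (g (xs m + xs n))"
      using complex_Re_le_cmod [of "g (xs m) + g (xs n)"] by (simp add: linear_simps [OF g])
    also have "\<dots> \<le> M * norm (xs m + xs n)"
      unfolding M_def by (rule onorm [OF g])
    finally show "2 - (1 / Suc m + 1 / Suc n) \<le> norm (xs m + xs n)"
      using g_pos by (simp add: M_def)
    show "0 \<le> 2 - (1 / Suc m + 1 / Suc n)"
    proof -
      have "1 / real (Suc k) \<le> 1" for k
        by (simp add: field_simps)
      from this [of m] this [of n] show ?thesis
        by linarith
    qed
  qed
  obtain N where N: "1 / Suc N < e\<^sup>2 / 8"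
    using \<open>0 < e\<close> reals_Archimedean [of "e\<^sup>2 / 8"] by (auto simp: field_simps)
  have "dist (xs m) (xs n) < e" if "N \<le> m" "N \<le> n" for m n
  proof -
    have "(norm (xs m - xs n))\<^sup>2 \<le> 4 * (1 / Suc m + 1 / Suc n)"
      by (rule close)
    also have "\<dots> \<le> 4 * (1 / Suc N + 1 / Suc N)"
      using that by (intro mult_left_mono add_mono) (simp_all add: frac_le)
    also have "\<dots> < e\<^sup>2"
      using N by simp
    finally have "(norm (xs m - xs n))\<^sup>2 < e\<^sup>2" .
    with \<open>0 < e\<close> show ?thesis
      by (simp add: dist_norm power_less_imp_less_base)
  qed
  then show "\<exists>N. \<forall>m\<ge>N. \<forall>n\<ge>N. dist (xs m) (xs n) < e"
    by blast
qed

lemma bounded_functional_attains_norm: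
  fixes g :: "'a::chilbert_space \<Rightarrow> complex"
  assumes g: "bounded_linear g" and g_scaleC: "\<And>c x. g (scaleC c x) = c * g x"
    and g_pos: "0 < onorm g"
  shows "\<exists>u. norm u = 1 \<and> g u = of_real (onorm g)"
proof -
  have "\<exists>x. norm x = 1 \<and> Im (g x) = 0 \<and> onorm g - onorm g / Suc n < Re (g x)" for n
  proof (rule exists_unit_vector_real_value_gt [OF g g_scaleC])
    show "0 < onorm g / Suc n" "onorm g / Suc n \<le> onorm g"
      using g_pos by (simp_all add: field_simps)
  qed
  then obtain xs where xs: "\<And>n. norm (xs n) = 1" "\<And>n. Im (g (xs n)) = 0"
    "\<And>n. onorm g - onorm g / Suc n < Re (g (xs n))"
    by metis
  obtain u where u: "xs \<longlonglongrightarrow> u"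
    using maximizing_unit_sequence_Cauchy [OF g g_pos xs(1,3)] Cauchy_convergent convergent_def
    by blast
  have "(\<lambda>n. norm (xs n)) \<longlonglongrightarrow> norm u"
    using u by (rule tendsto_norm)
  then have "norm u = 1"
    using LIMSEQ_unique by (auto simp: xs(1))
  have gu: "(\<lambda>n. g (xs n)) \<longlonglongrightarrow> g u"
    using u by (rule bounded_linear.tendsto [OF g])
  have "(\<lambda>n. Im (g (xs n))) \<longlonglongrightarrow> Im (g u)"
    using gu by (rule tendsto_Im)
  then have "Im (g u) = 0"
    using LIMSEQ_unique by (auto simp: xs(2))
  have "(\<lambda>n. onorm g - onorm g * (1 / Suc n)) \<longlonglongrightarrow> onorm g - onorm g * 0"
    using LIMSEQ_inverse_real_of_nat by (intro tendsto_intros) (simp add: inverse_eq_divide)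
  then have lower: "(\<lambda>n. onorm g - onorm g * (1 / Suc n)) \<longlonglongrightarrow> onorm g"
    by simp
  have "(\<lambda>n. Re (g (xs n))) \<longlonglongrightarrow> onorm g"
  proof (rule tendsto_sandwich [OF _ _ lower tendsto_const])
    show "\<forall>\<^sub>F n in sequentially. onorm g - onorm g * (1 / Suc n) \<le> Re (g (xs n))"
      using xs(3) by (simp add: less_imp_le)
    have "Re (g (xs n)) \<le> onorm g" for n
      using complex_Re_le_cmod [of "g (xs n)"] onorm [OF g, of "xs n"] xs(1) [of n] by simp
    then show "\<forall>\<^sub>F n in sequentially. Re (g (xs n)) \<le> onorm g"
      by simp
  qed
  then have "Re (g u) = onorm g"
    using gu tendsto_Re LIMSEQ_unique by blast
  with \<open>norm u = 1\<close> \<open>Im (g u) = 0\<close> show ?thesis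
    by (auto simp: complex_eq_iff)
qed

lemma norm_attaining_vector_orthogonal_kernel:
  fixes g :: "'a::complex_inner \<Rightarrow> complex"
  assumes g: "bounded_linear g" and g_scaleC: "\<And>c x. g (scaleC c x) = c * g x"
    and g_pos: "0 < onorm g" and u: "norm u = 1" "g u = of_real (onorm g)" and y: "g y = 0"
  shows "cinner u y = 0"
proof -
  define a where "a = cinner u y"
  define r where "r = 1 / ((norm y)\<^sup>2 + 1)"
  have "0 < (norm y)\<^sup>2 + 1"
    by (simp add: add_nonneg_pos)
  then have r: "0 < r" "r * (norm y)\<^sup>2 < 1"
    by (simp_all add: r_def field_simps)
  define t where "t = - of_real r * cnj a"
  \<comment> \<open>\<open>u\<close> has minimal norm on the affine hyperplane \<open>g = onorm g\<close>\<close>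
  have "onorm g = cmod (g (u + scaleC t y))"
    using g_pos by (simp add: linear_simps [OF g] g_scaleC u y)
  also have "\<dots> \<le> onorm g * norm (u + scaleC t y)"
    by (rule onorm [OF g])
  finally have "1 \<le> (norm (u + scaleC t y))\<^sup>2"
    using g_pos by (simp add: one_le_power)
  also have "(norm (u + scaleC t y))\<^sup>2 = 1 + (cmod t)\<^sup>2 * (norm y)\<^sup>2 + 2 * Re (t * a)"
    by (simp add: power2_norm_add norm_scaleC cinner_scaleC_right u a_def power_mult_distrib)
  also have "t * a = of_real (- r * (cmod a)\<^sup>2)"
    by (simp add: t_def complex_norm_square mult.commute del: of_real_power)
  also have "(cmod t)\<^sup>2 = r\<^sup>2 * (cmod a)\<^sup>2"
    using r by (simp add: t_def norm_mult power_mult_distrib)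
  finally have "r * (cmod a)\<^sup>2 * (2 - r * (norm y)\<^sup>2) \<le> 0"
    by (simp add: power2_eq_square algebra_simps)
  moreover have "0 < r * (2 - r * (norm y)\<^sup>2)"
    using r by simp
  ultimately have "(cmod a)\<^sup>2 \<le> 0"
    by (smt (verit) mult.assoc mult.commute mult_pos_pos zero_le_power2)
  then show ?thesis
    by (simp add: a_def)
qed

lemma riesz_representation:
  fixes g :: "'a::chilbert_space \<Rightarrow> complex"
  assumes g: "bounded_linear g" and g_scaleC: "\<And>c x. g (scaleC c x) = c * g x"
  shows "\<exists>z. \<forall>x. g x = cinner z x"
proof (cases "0 < onorm g")
  case True
  define M where "M = onorm g"
  obtain u where u: "norm u = 1" "g u = of_real M"
    using bounded_functional_attains_norm [OF g g_scaleC True] by (auto simp: M_def)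
  have "g x = cinner (scaleC (of_real M) u) x" for x
  proof -
    define y where "y = x - scaleC (g x / of_real M) u"
    have "g y = 0"
      using True by (simp add: y_def linear_simps [OF g] g_scaleC u M_def)
    then have "cinner u y = 0"
      using norm_attaining_vector_orthogonal_kernel [OF g g_scaleC True] u by (simp add: M_def)
    then show ?thesis
      using True u by (simp add: y_def cinner_right.diff cinner_scaleC_left cinner_scaleC_right
          cinner_self M_def)
  qed
  then show ?thesis
    by blast
next
  case False
  then have "g x = cinner 0 x" for x
    using onorm_pos_lt [OF g] by auto
  then show ?thesis
    by blast
qed

lemma norm_le_onorm_if_cinner_eq:
  fixes T :: "'a::complex_inner \<Rightarrow> 'a"
  assumes T: "bounded_clinear T" and v: "\<And>x. cinner v x = cinner y (T x)"
  shows "norm v \<le> onorm T * norm y"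
proof -
  have "(norm v)\<^sup>2 = Re (cinner y (T v))"
    by (simp add: v [symmetric] Re_cinner_self)
  also have "\<dots> \<le> norm y * norm (T v)"
    using complex_Re_le_cmod norm_cinner_le by (rule order_trans)
  also have "\<dots> \<le> norm y * (onorm T * norm v)"
    by (simp add: bounded_clinear_onorm [OF T] mult_left_mono)
  finally have "(norm v)\<^sup>2 \<le> norm v * (onorm T * norm y)"
    by (simp add: mult_ac)
  then show ?thesis
    by (rule real_le_of_power2_le_mult) (simp add: onorm_nonneg_clinear [OF T])
qed

lemma ex1_adjoint:
  fixes T :: "'a::chilbert_space \<Rightarrow> 'a"
  assumes T: "bounded_clinear T"
  shows "\<exists>!S. bounded_clinear S \<and> (\<forall>x y. cinner (T x) y = cinner x (S y))"
proof -
  have "\<exists>z. \<forall>x. cinner y (T x) = cinner z x" for y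
    using bounded_linear_compose [OF bounded_linear_cinner_right bounded_clinear_imp_bounded_linear [OF T]]
    by (rule riesz_representation) (simp add: bounded_clinear_simps(6) [OF T] cinner_scaleC_right)
  then obtain S where S: "\<And>y x. cinner y (T x) = cinner (S y) x"
    by metis
  have "bounded_clinear S"
    unfolding bounded_clinear_def
  proof (intro conjI allI exI)
    show "S (x + y) = S x + S y" for x y
      by (rule cinner_ext_left) (simp add: S [symmetric] cinner_add_left)
    show "S (scaleC c x) = scaleC c (S x)" for c x
      by (rule cinner_ext_left) (simp add: S [symmetric] cinner_scaleC_left)
    show "norm (S y) \<le> norm y * onorm T" for y
      using norm_le_onorm_if_cinner_eq [OF T, of "S y" y] by (simp add: S mult.commute)
  qed
  moreover have S_adj: "cinner (T x) y = cinner x (S y)" for x y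
    by (metis S cinner_commute)
  moreover have "S' = S" if "\<forall>x y. cinner (T x) y = cinner x (S' y)" for S'
    using that S_adj by (intro ext cinner_ext_right) metis
  ultimately show ?thesis
    by blast
qed

lemma adj_characterization:
  fixes T :: "'a::chilbert_space \<Rightarrow> 'a"
  assumes "bounded_clinear T"
  shows "bounded_clinear (adj T) \<and> (\<forall>x y. cinner (T x) y = cinner x (adj T y))"
  unfolding adj_def by (rule theI' [OF ex1_adjoint [OF assms]])

lemma bounded_clinear_adj:
  "bounded_clinear T \<Longrightarrow> bounded_clinear (adj (T::'a::chilbert_space \<Rightarrow> 'a))"
  using adj_characterization by blast

lemma cinner_adj_right:
  "bounded_clinear T \<Longrightarrow> cinner (T x) y = cinner x (adj (T::'a::chilbert_space \<Rightarrow> 'a) y)"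
  using adj_characterization by blast

lemma cinner_adj_left:
  "bounded_clinear T \<Longrightarrow> cinner (adj T x) y = cinner x ((T::'a::chilbert_space \<Rightarrow> 'a) y)"
  by (metis cinner_adj_right cinner_commute)

lemma adj_adj: "bounded_clinear T \<Longrightarrow> adj (adj T) = (T::'a::chilbert_space \<Rightarrow> 'a)"
  unfolding adj_def [of "adj T"]
  by (rule the1_equality [OF ex1_adjoint]) (auto simp: bounded_clinear_adj cinner_adj_left)

lemma onorm_adj:
  "bounded_clinear T \<Longrightarrow> onorm (adj T) = onorm (T::'a::chilbert_space \<Rightarrow> 'a)"
proof -
  have le: "onorm (adj S) \<le> onorm S" if S: "bounded_clinear (S::'a \<Rightarrow> 'a)" for S
    by (rule onorm_bound [OF onorm_nonneg_clinear [OF S]])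
      (rule norm_le_onorm_if_cinner_eq [OF S cinner_adj_left [OF S]])
  assume "bounded_clinear T"
  then show ?thesis
    using le [of T] le [of "adj T"] by (simp add: bounded_clinear_adj adj_adj)
qed

section \<open>Positive operators\<close>

lemma positive_op_cinner_commute:
  assumes P: "positive_op P"
  shows "cinner (P x) y = cinner x (P y)"
proof -
  have P_clinear: "bounded_clinear P" and Im_P: "\<And>z. Im (cinner (P z) z) = 0"
    using P by (auto simp: positive_op_def)
  define a where "a = cinner (P x) y"
  define b where "b = cinner (P y) x"
  have "cinner (P (x + y)) (x + y) = cinner (P x) x + cinner (P y) y + (a + b)"
    by (simp add: bounded_clinear_simps [OF P_clinear] cinner_add_left cinner_add_right a_def b_def)
  then have "Im (a + b) = 0"
    by (metis Im_P add_cancel_right_right plus_complex.sel(2))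
  have "cinner (P (x + scaleC \<i> y)) (x + scaleC \<i> y) = cinner (P x) x + cinner (P y) y + \<i> * (a - b)"
    by (simp add: bounded_clinear_simps [OF P_clinear] cinner_add_left cinner_add_right
        cinner_scaleC_left cinner_scaleC_right a_def b_def algebra_simps)
  then have "Re (a - b) = 0"
    by (metis Im_P add_cancel_right_right plus_complex.sel(2) Im_i_times)
  with \<open>Im (a + b) = 0\<close> have "a = cnj b"
    by (simp add: complex_eq_iff)
  then show ?thesis
    by (simp add: a_def b_def cinner_commute [of x])
qed

lemma positive_op_scaleR:
  "positive_op P \<Longrightarrow> 0 \<le> r \<Longrightarrow> positive_op (\<lambda>x. r *\<^sub>R P x)"
  by (simp add: positive_op_def bounded_clinear_scaleR cinner_scaleR_left)

lemma positive_op_apply_eq_zero: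
  assumes P: "positive_op P" and y: "Re (cinner (P y) y) = 0"
  shows "P y = 0"
proof (rule ccontr)
  assume "P y \<noteq> 0"
  have P_clinear: "bounded_clinear P"
    using P by (simp add: positive_op_def)
  define q where "q = (norm (P y))\<^sup>2"
  define b where "b = Re (cinner (P (P y)) (P y))"
  have "0 < q" "0 \<le> b"
    using \<open>P y \<noteq> 0\<close> P by (simp_all add: q_def b_def positive_op_def)
  define t where "t = - q / (b + 1)"
  \<comment> \<open>the quadratic form of \<open>P\<close> at \<open>y + t P y\<close> is \<open>2 t q + t\<^sup>2 b\<close>,
    negative for this \<open>t\<close>\<close>
  have "cinner (P (y + t *\<^sub>R P y)) (y + t *\<^sub>R P y)
      = cinner (P y) y + of_real t * cinner (P y) (P y) + of_real t * cinner (P (P y)) y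
        + of_real t * of_real t * cinner (P (P y)) (P y)"
    by (simp add: bounded_clinear_simps [OF P_clinear] cinner_add_left cinner_add_right
        cinner_scaleR_left cinner_scaleR_right algebra_simps)
  then have "Re (cinner (P (y + t *\<^sub>R P y)) (y + t *\<^sub>R P y)) = t * (2 * q + t * b)"
    using y by (simp add: positive_op_cinner_commute [OF P, of "P y"] q_def b_def Re_cinner_self
        algebra_simps)
  also have "t * (2 * q + t * b) < 0"
  proof (rule mult_neg_pos)
    show "t < 0"
      using \<open>0 < q\<close> \<open>0 \<le> b\<close> by (simp add: t_def)
    have "q * (b / (b + 1)) \<le> q"
      using \<open>0 < q\<close> \<open>0 \<le> b\<close> by (intro mult_left_le) simp_all
    then show "0 < 2 * q + t * b"
      using \<open>0 < q\<close> by (simp add: t_def)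
  qed
  finally show False
    using P by (simp add: positive_op_def not_le [symmetric])
qed

lemma positive_sqrt_unique_if_commute:
  fixes P Q :: "'a::complex_inner \<Rightarrow> 'a"
  assumes P: "positive_op P" and Q: "positive_op Q"
    and PP_QQ: "\<And>x. P (P x) = Q (Q x)" and PQ: "\<And>x. P (Q x) = Q (P x)"
  shows "P = Q"
proof
  fix x
  have P_clinear: "bounded_clinear P" and Q_clinear: "bounded_clinear Q"
    using P Q by (simp_all add: positive_op_def)
  define y where "y = P x - Q x"
  \<comment> \<open>\<open>(P + Q) (P - Q) = P\<^sup>2 - Q\<^sup>2 = 0\<close> since \<open>P\<close> and \<open>Q\<close> commute\<close>
  have "P y + Q y = 0"
    by (simp add: y_def bounded_clinear_simps [OF P_clinear] bounded_clinear_simps [OF Q_clinear]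
        PP_QQ PQ)
  then have "Re (cinner (P y) y) + Re (cinner (Q y) y) = 0"
    by (metis cinner_add_left cinner_left.zero plus_complex.sel(1) zero_complex.sel(1))
  moreover have "0 \<le> Re (cinner (P y) y)" "0 \<le> Re (cinner (Q y) y)"
    using P Q by (simp_all add: positive_op_def)
  ultimately have "P y = 0" "Q y = 0"
    using positive_op_apply_eq_zero [OF P] positive_op_apply_eq_zero [OF Q] by simp_all
  then have "cinner y y = 0"
    by (simp add: y_def cinner_left.diff positive_op_cinner_commute [OF P]
        positive_op_cinner_commute [OF Q] flip: cinner_right.diff)
  then show "P x = Q x"
    by (simp add: y_def cinner_eq_zero_iff)
qed

section \<open>Positive square roots\<close>

text \<open>The Taylor coefficients of \<open>1 - sqrt (1 - t)\<close>, determined by the identity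
  \<open>f\<^sup>2 = 2 f - t\<close> for \<open>f t = 1 - sqrt (1 - t)\<close>.\<close>

function sqrt_coeff :: "nat \<Rightarrow> real" where
  "sqrt_coeff n =
    (if n = 0 then 0 else if n = 1 then 1 / 2
     else (\<Sum>i\<in>{1..<n}. sqrt_coeff i * sqrt_coeff (n - i)) / 2)"
  by auto
termination
  by (relation "Wellfounded.measure id") auto

declare sqrt_coeff.simps [simp del]

lemma sqrt_coeff_0 [simp]: "sqrt_coeff 0 = 0"
  by (simp add: sqrt_coeff.simps)

lemma sqrt_coeff_1 [simp]: "sqrt_coeff (Suc 0) = 1 / 2"
  by (simp add: sqrt_coeff.simps)

lemma sqrt_coeff_nonneg: "0 \<le> sqrt_coeff n"
proof (induction n rule: less_induct)
  case (less n)
  then show ?case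
    by (subst sqrt_coeff.simps) (auto intro!: sum_nonneg divide_nonneg_pos)
qed

lemma sqrt_coeff_convolution:
  "(\<Sum>i\<le>k. sqrt_coeff i * sqrt_coeff (k - i)) = 2 * sqrt_coeff k - (if k = 1 then 1 else 0)"
proof (cases "k < 2")
  case False
  have "(\<Sum>i\<le>k. sqrt_coeff i * sqrt_coeff (k - i)) = (\<Sum>i\<in>{1..<k}. sqrt_coeff i * sqrt_coeff (k - i))"
  proof (rule sum.mono_neutral_right)
    show "\<forall>i\<in>{..k} - {1..<k}. sqrt_coeff i * sqrt_coeff (k - i) = 0"
      by (auto simp: not_less_eq_eq le_Suc_eq)
  qed auto
  with False show ?thesis
    by (subst (2) sqrt_coeff.simps) simp
qed (auto simp: less_2_cases_iff)

lemma sqrt_coeff_partial_sum_le: "(\<Sum>i\<le>N. sqrt_coeff i) \<le> 1"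
proof (induction N)
  case (Suc M)
  define N where "N = Suc M"
  define g where "g = (\<lambda>(i, j). sqrt_coeff i * sqrt_coeff j)"
  \<comment> \<open>with \<open>S\<^sub>n\<close> the partial sums, \<open>2 S\<^sub>N - 1\<close> is a partial sum of the Cauchy square of
    the series, which is at most \<open>S\<^sub>N S\<^sub>M\<close> because the coefficient at \<open>0\<close> vanishes\<close>
  have "2 * (\<Sum>k\<le>N. sqrt_coeff k) - 1 = (\<Sum>k\<le>N. \<Sum>i\<le>k. sqrt_coeff i * sqrt_coeff (k - i))"
    by (simp add: sqrt_coeff_convolution sum_subtractf sum_distrib_left N_def sum.delta)
  also have "\<dots> = sum g {(i, j). i + j \<le> N}"
    by (simp add: g_def sum.triangle_reindex_eq)
  also have "\<dots> = sum g ({(i, j). i + j \<le> N} \<inter> {(i, j). 0 < i})"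
  proof (rule sum.mono_neutral_right)
    show "finite {(i, j). i + j \<le> N}"
      by (rule finite_subset [of _ "{..N} \<times> {..N}"]) auto
  qed (auto simp: g_def, metis sqrt_coeff_0 gr0I)
  also have "\<dots> \<le> sum g ({..N} \<times> {..M})"
    by (rule sum_mono2) (auto simp: g_def N_def intro!: mult_nonneg_nonneg sqrt_coeff_nonneg)
  also have "\<dots> = (\<Sum>i\<le>N. sqrt_coeff i) * (\<Sum>j\<le>M. sqrt_coeff j)"
    by (simp add: g_def sum_product sum.cartesian_product)
  also have "\<dots> \<le> (\<Sum>i\<le>N. sqrt_coeff i)"
    using Suc.IH by (intro mult_right_le_one_le sum_nonneg sqrt_coeff_nonneg)
  finally show ?case
    by (simp add: N_def)
qed simp

lemma sqrt_coeff_sum_lessThan_le: "(\<Sum>i<n. sqrt_coeff i) \<le> 1"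
  by (cases n) (simp_all add: lessThan_Suc_atMost sqrt_coeff_partial_sum_le)

lemma summable_sqrt_coeff: "summable sqrt_coeff"
  by (rule summableI_nonneg_bounded [of _ 1]) (simp_all add: sqrt_coeff_nonneg sqrt_coeff_sum_lessThan_le)

lemma suminf_sqrt_coeff_le: "suminf sqrt_coeff \<le> 1"
  by (rule suminf_le_const [OF summable_sqrt_coeff sqrt_coeff_sum_lessThan_le])

lemma (in bounded_bilinear) Cauchy_product_sums:
  assumes a: "summable (\<lambda>k. norm (a k))" "a sums A"
    and b: "summable (\<lambda>k. norm (b k))" "b sums B"
  shows "(\<lambda>k. \<Sum>i\<le>k. prod (a i) (b (k - i))) sums prod A B"
proof -
  define square where "square n = {..<n} \<times> {..<n}" for n :: nat
  define triangle where "triangle n = {(i, j). i + j < n}" for n :: nat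
  have triangle_square: "triangle n \<subseteq> square n" and finite_square: "finite (square n)" for n
    by (auto simp: triangle_def square_def)
  define g where "g = (\<lambda>(i, j). prod (a i) (b j))"
  define f where "f = (\<lambda>(i, j). norm (a i) * norm (b j))"
  define L where "L = (\<Sum>k. norm (a k)) * (\<Sum>k. norm (b k))"
  have "sum g (square n) = prod (\<Sum>k<n. a k) (\<Sum>k<n. b k)" for n
    by (subst sum_left) (simp add: g_def square_def sum_right sum.cartesian_product)
  then have "(\<lambda>n. sum g (square n)) \<longlonglongrightarrow> prod A B"
    using tendsto [OF a(2) [unfolded sums_def] b(2) [unfolded sums_def]] by simp
  moreover have "(\<lambda>n. sum f (square n)) \<longlonglongrightarrow> L"
    using tendsto_mult [OF summable_LIMSEQ [OF a(1)] summable_LIMSEQ [OF b(1)]]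
    by (simp add: f_def L_def square_def sum_product sum.cartesian_product)
  moreover have "(\<lambda>n. sum f (triangle n)) \<longlonglongrightarrow> L"
    using Cauchy_product_sums [of "\<lambda>k. norm (a k)" "\<lambda>k. norm (b k)"] a(1) b(1)
    by (simp add: f_def L_def triangle_def sums_def sum.triangle_reindex)
  ultimately have f_gap: "(\<lambda>n. sum f (square n - triangle n)) \<longlonglongrightarrow> 0"
    using tendsto_diff [of "\<lambda>n. sum f (square n)" L sequentially "\<lambda>n. sum f (triangle n)" L]
    by (simp add: sum_diff finite_square triangle_square)
  \<comment> \<open>the terms off the triangle are dominated by the Cauchy product of the norms\<close>
  obtain K where K: "\<And>x y. norm (prod x y) \<le> norm x * norm y * K"
    using bounded by blast
  have "\<forall>n. norm (sum g (square n - triangle n)) \<le> sum f (square n - triangle n) * K"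
    by (intro allI order_trans [OF norm_sum]) (auto simp: sum_distrib_right g_def f_def intro: sum_mono K)
  then have "(\<lambda>n. sum g (square n - triangle n)) \<longlonglongrightarrow> 0"
    using tendsto_mult_left_zero [OF f_gap, of K] by (rule Lim_null_comparison [OF always_eventually])
  with \<open>(\<lambda>n. sum g (square n)) \<longlonglongrightarrow> prod A B\<close>
  have "(\<lambda>n. sum g (triangle n)) \<longlonglongrightarrow> prod A B"
    using tendsto_diff by (fastforce simp: sum_diff finite_square triangle_square)
  then show ?thesis
    by (simp add: sums_def g_def triangle_def sum.triangle_reindex)
qed

subclass (in chilbert_space) banach ..

locale hermitian_contraction =
  fixes R :: "'a::chilbert_space \<Rightarrow> 'a"
  assumes bounded_clinear_R: "bounded_clinear R"
    and R_cinner_commute: "\<And>x y. cinner (R x) y = cinner x (R y)"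
    and norm_R_le: "\<And>x. norm (R x) \<le> norm x"
begin

lemma bounded_clinear_funpow: "bounded_clinear (R ^^ n)"
  by (induction n) (simp_all add: id_def bounded_clinear_ident bounded_clinear_compose bounded_clinear_R)

lemma norm_funpow_le: "norm ((R ^^ n) x) \<le> norm x"
  by (induction n) (auto intro: order_trans [OF norm_R_le])

lemma funpow_cinner_commute: "cinner ((R ^^ n) x) y = cinner x ((R ^^ n) y)"
proof (induction n arbitrary: y)
  case (Suc n)
  have "cinner ((R ^^ Suc n) x) y = cinner x ((R ^^ n) (R y))"
    by (simp add: R_cinner_commute Suc.IH)
  then show ?case
    by (simp add: funpow_swap1)
qed simp

definition power_op :: "nat \<Rightarrow> 'a \<Rightarrow>\<^sub>L 'a"
  where "power_op n = Blinfun (R ^^ n)"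

lemma blinfun_apply_power_op [simp]: "blinfun_apply (power_op n) = R ^^ n"
  unfolding power_op_def
  by (rule bounded_linear_Blinfun_apply [OF bounded_clinear_imp_bounded_linear [OF bounded_clinear_funpow]])

lemma norm_power_op_le: "norm (power_op n) \<le> 1"
  by (rule norm_blinfun_bound) (simp_all add: norm_funpow_le)

lemma power_op_compose: "power_op i o\<^sub>L power_op j = power_op (i + j)"
  by (rule blinfun_eqI) (simp add: funpow_add)

definition one_minus_sqrt :: "'a \<Rightarrow>\<^sub>L 'a"
  where "one_minus_sqrt = (\<Sum>n. sqrt_coeff n *\<^sub>R power_op n)"

lemma summable_norm_one_minus_sqrt_series:
  "summable (\<lambda>n. norm (sqrt_coeff n *\<^sub>R power_op n))"
proof (rule summable_comparison_test [OF _ summable_sqrt_coeff])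
  have "norm (sqrt_coeff n *\<^sub>R power_op n) \<le> sqrt_coeff n" for n
    using mult_left_mono [OF norm_power_op_le sqrt_coeff_nonneg] by (simp add: sqrt_coeff_nonneg)
  then show "\<exists>N. \<forall>n\<ge>N. norm (norm (sqrt_coeff n *\<^sub>R power_op n)) \<le> sqrt_coeff n"
    by simp
qed

lemma one_minus_sqrt_sums: "(\<lambda>n. sqrt_coeff n *\<^sub>R power_op n) sums one_minus_sqrt"
  unfolding one_minus_sqrt_def
  by (rule summable_sums [OF summable_norm_cancel [OF summable_norm_one_minus_sqrt_series]])

lemma one_minus_sqrt_square:
  "one_minus_sqrt o\<^sub>L one_minus_sqrt = 2 *\<^sub>R one_minus_sqrt - power_op 1"
proof -
  have Cauchy_product:
    "(\<lambda>k. \<Sum>i\<le>k. (sqrt_coeff i *\<^sub>R power_op i) o\<^sub>L (sqrt_coeff (k - i) *\<^sub>R power_op (k - i)))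
      sums (one_minus_sqrt o\<^sub>L one_minus_sqrt)"
    by (rule bounded_bilinear.Cauchy_product_sums [OF bounded_bilinear_blinfun_compose
        summable_norm_one_minus_sqrt_series one_minus_sqrt_sums
        summable_norm_one_minus_sqrt_series one_minus_sqrt_sums])
  have "(\<Sum>i\<le>k. (sqrt_coeff i *\<^sub>R power_op i) o\<^sub>L (sqrt_coeff (k - i) *\<^sub>R power_op (k - i)))
      = 2 *\<^sub>R (sqrt_coeff k *\<^sub>R power_op k) - (if k = 1 then power_op 1 else 0)" for k
  proof -
    have "(\<Sum>i\<le>k. (sqrt_coeff i *\<^sub>R power_op i) o\<^sub>L (sqrt_coeff (k - i) *\<^sub>R power_op (k - i)))
        = (\<Sum>i\<le>k. (sqrt_coeff i * sqrt_coeff (k - i)) *\<^sub>R power_op k)"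
      by (intro sum.cong refl)
        (simp add: bounded_bilinear.scaleR_left [OF bounded_bilinear_blinfun_compose]
          bounded_bilinear.scaleR_right [OF bounded_bilinear_blinfun_compose] power_op_compose)
    also have "\<dots> = (\<Sum>i\<le>k. sqrt_coeff i * sqrt_coeff (k - i)) *\<^sub>R power_op k"
      by (rule scaleR_sum_left [symmetric])
    also have "\<dots> = 2 *\<^sub>R (sqrt_coeff k *\<^sub>R power_op k) - (if k = 1 then power_op 1 else 0)"
      by (simp add: sqrt_coeff_convolution scaleR_left_diff_distrib)
    finally show ?thesis .
  qed
  moreover have "(\<lambda>k. 2 *\<^sub>R (sqrt_coeff k *\<^sub>R power_op k) - (if k = 1 then power_op 1 else 0))
      sums (2 *\<^sub>R one_minus_sqrt - power_op 1)"
    by (intro sums_diff sums_scaleR_right one_minus_sqrt_sums) (rule sums_single [of 1 "\<lambda>_. power_op 1"])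
  ultimately show ?thesis
    using Cauchy_product sums_unique2 by simp
qed

lemma one_minus_sqrt_apply_sums:
  "(\<lambda>n. sqrt_coeff n *\<^sub>R (R ^^ n) x) sums blinfun_apply one_minus_sqrt x"
  using bounded_linear.sums [OF blinfun.bounded_linear_left one_minus_sqrt_sums, of x]
  by (simp add: blinfun.scaleR_left)

lemma commute_one_minus_sqrt:
  assumes Q: "bounded_linear Q" and QR: "\<And>x. Q (R x) = R (Q x)"
  shows "Q (blinfun_apply one_minus_sqrt x) = blinfun_apply one_minus_sqrt (Q x)"
proof -
  have "Q ((R ^^ n) x) = (R ^^ n) (Q x)" for n
    by (induction n) (simp_all add: QR)
  then have "(\<lambda>n. sqrt_coeff n *\<^sub>R (R ^^ n) (Q x)) sums Q (blinfun_apply one_minus_sqrt x)"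
    using bounded_linear.sums [OF Q one_minus_sqrt_apply_sums [of x]] by (simp add: linear_simps [OF Q])
  then show ?thesis
    using one_minus_sqrt_apply_sums by (rule sums_unique2)
qed

lemma cinner_one_minus_sqrt:
  "Im (cinner (blinfun_apply one_minus_sqrt x) x) = 0 \<and>
    Re (cinner (blinfun_apply one_minus_sqrt x) x) \<le> (norm x)\<^sup>2"
proof
  have terms:
    "(\<lambda>n. cinner (sqrt_coeff n *\<^sub>R (R ^^ n) x) x) sums cinner (blinfun_apply one_minus_sqrt x) x"
    by (rule bounded_linear.sums [OF bounded_linear_cinner_left one_minus_sqrt_apply_sums])
  have "Im (cinner ((R ^^ n) x) x) = 0" for n
    using cinner_commute [of "(R ^^ n) x" x] by (simp add: funpow_cinner_commute complex_eq_iff)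
  then have "(\<lambda>n. 0) sums Im (cinner (blinfun_apply one_minus_sqrt x) x)"
    using bounded_linear.sums [OF bounded_linear_Im terms] by (simp add: cinner_scaleR_left)
  then show "Im (cinner (blinfun_apply one_minus_sqrt x) x) = 0"
    using sums_zero by (rule sums_unique2)
  have "Re (cinner (sqrt_coeff n *\<^sub>R (R ^^ n) x) x) \<le> sqrt_coeff n * (norm x)\<^sup>2" for n
  proof -
    have "Re (cinner ((R ^^ n) x) x) \<le> norm ((R ^^ n) x) * norm x"
      using complex_Re_le_cmod norm_cinner_le by (rule order_trans)
    also have "\<dots> \<le> (norm x)\<^sup>2"
      using mult_right_mono [OF norm_funpow_le] by (simp add: power2_eq_square)
    finally show ?thesis
      by (simp add: cinner_scaleR_left mult_left_mono sqrt_coeff_nonneg)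
  qed
  then have "Re (cinner (blinfun_apply one_minus_sqrt x) x) \<le> suminf sqrt_coeff * (norm x)\<^sup>2"
    by (rule sums_le [OF _ bounded_linear.sums [OF bounded_linear_Re terms]
      sums_mult2 [OF summable_sums [OF summable_sqrt_coeff]]])
  also have "\<dots> \<le> (norm x)\<^sup>2"
    using mult_right_mono [OF suminf_sqrt_coeff_le] by simp
  finally show "Re (cinner (blinfun_apply one_minus_sqrt x) x) \<le> (norm x)\<^sup>2" .
qed

definition sqrt_id_minus :: "'a \<Rightarrow> 'a"
  where "sqrt_id_minus x = x - blinfun_apply one_minus_sqrt x"

lemma sqrt_id_minus_square: "sqrt_id_minus (sqrt_id_minus x) = x - R x"
proof -
  have "blinfun_apply one_minus_sqrt (blinfun_apply one_minus_sqrt x)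
      = 2 *\<^sub>R blinfun_apply one_minus_sqrt x - R x"
    using arg_cong [OF one_minus_sqrt_square, of "\<lambda>A. blinfun_apply A x"]
    by (simp add: blinfun.diff_left blinfun.scaleR_left)
  then show ?thesis
    by (simp add: sqrt_id_minus_def blinfun.diff_right algebra_simps scaleR_2)
qed

lemma positive_op_sqrt_id_minus: "positive_op sqrt_id_minus"
  unfolding positive_op_def bounded_clinear_iff
proof (intro conjI allI)
  show "bounded_linear sqrt_id_minus"
    unfolding sqrt_id_minus_def by (intro bounded_linear_sub bounded_linear_ident blinfun.bounded_linear_right)
  show "sqrt_id_minus (scaleC c x) = scaleC c (sqrt_id_minus x)" for c x
  proof -
    have "scaleC c (blinfun_apply one_minus_sqrt x) = blinfun_apply one_minus_sqrt (scaleC c x)"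
      by (rule commute_one_minus_sqrt [OF bounded_linear_scaleC])
        (simp add: bounded_clinear_simps(6) [OF bounded_clinear_R])
    then show ?thesis
      by (simp add: sqrt_id_minus_def scaleC_right.diff)
  qed
  show "Im (cinner (sqrt_id_minus x) x) = 0" "0 \<le> Re (cinner (sqrt_id_minus x) x)" for x
    using cinner_one_minus_sqrt [of x]
    by (simp_all add: sqrt_id_minus_def cinner_left.diff Re_cinner_self cinner_self del: of_real_power)
qed

lemma commute_sqrt_id_minus:
  assumes "bounded_linear Q" and "\<And>x. Q (R x) = R (Q x)"
  shows "Q (sqrt_id_minus x) = sqrt_id_minus (Q x)"
  using assms by (simp add: sqrt_id_minus_def linear_simps commute_one_minus_sqrt)

end

lemma hermitian_contraction_id_minus_adj_comp:
  fixes T :: "'a::chilbert_space \<Rightarrow> 'a"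
  assumes T: "bounded_clinear T" and k: "0 < k" "(onorm T)\<^sup>2 \<le> k"
  shows "hermitian_contraction (\<lambda>x. x - (1 / k) *\<^sub>R adj T (T x))"
proof
  have T': "bounded_clinear (adj T)"
    using T by (rule bounded_clinear_adj)
  show "bounded_clinear (\<lambda>x. x - (1 / k) *\<^sub>R adj T (T x))"
    by (rule bounded_clinear_diff [OF bounded_clinear_ident
        bounded_clinear_scaleR [OF bounded_clinear_compose [OF T' T]]])
  show "cinner (x - (1 / k) *\<^sub>R adj T (T x)) y = cinner x (y - (1 / k) *\<^sub>R adj T (T y))" for x y
    by (simp add: cinner_left.diff cinner_right.diff cinner_scaleR_left cinner_scaleR_right
        cinner_adj_left [OF T] cinner_adj_right [OF T])
  show "norm (x - (1 / k) *\<^sub>R adj T (T x)) \<le> norm x" for x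
  proof -
    define t where "t = norm (T x)"
    have "norm (adj T (T x)) \<le> onorm T * t"
      using bounded_clinear_onorm [OF T', of "T x"] by (simp add: onorm_adj [OF T] t_def)
    then have "(norm (adj T (T x)))\<^sup>2 \<le> (onorm T * t)\<^sup>2"
      by (rule power_mono) simp
    also have "\<dots> = (onorm T)\<^sup>2 * t\<^sup>2"
      by (rule power_mult_distrib)
    also have "\<dots> \<le> k * t\<^sup>2"
      using k(2) by (simp add: mult_right_mono)
    finally have "(1 / k)\<^sup>2 * (norm (adj T (T x)))\<^sup>2 \<le> (1 / k) * t\<^sup>2"
      using k(1) by (simp add: power2_eq_square field_simps)
    moreover have "(norm (x - (1 / k) *\<^sub>R adj T (T x)))\<^sup>2
        = (norm x)\<^sup>2 + (1 / k)\<^sup>2 * (norm (adj T (T x)))\<^sup>2 - 2 * ((1 / k) * t\<^sup>2)"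
      using k(1) by (simp add: power2_norm_diff cinner_scaleR_right cinner_adj_right [OF T, symmetric]
          Re_cinner_self t_def power_mult_distrib power_divide)
    moreover have "0 \<le> (1 / k) * t\<^sup>2"
      using k(1) by simp
    ultimately have "(norm (x - (1 / k) *\<^sub>R adj T (T x)))\<^sup>2 \<le> (norm x)\<^sup>2"
      by linarith
    then show ?thesis
      by (simp add: power2_le_iff_abs_le)
  qed
qed

lemma ex1_positive_sqrt_adj_comp:
  fixes T :: "'a::chilbert_space \<Rightarrow> 'a"
  assumes T: "bounded_clinear T"
  shows "\<exists>!P. positive_op P \<and> P \<circ> P = adj T \<circ> T"
proof -
  define k where "k = (onorm T)\<^sup>2 + 1"
  have "0 < k"
    by (simp add: k_def add_nonneg_pos)
  define R where "R x = x - (1 / k) *\<^sub>R adj T (T x)" for x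
  interpret hermitian_contraction R
    unfolding R_def using T \<open>0 < k\<close> by (rule hermitian_contraction_id_minus_adj_comp) (simp add: k_def)
  \<comment> \<open>\<open>T\<^sup>* T = k (1 - R)\<close>, so \<open>sqrt k\<close> times the square root of \<open>1 - R\<close> is a square
    root of \<open>T\<^sup>* T\<close>\<close>
  define P where "P x = sqrt k *\<^sub>R sqrt_id_minus x" for x
  have P: "positive_op P"
    unfolding P_def using \<open>0 < k\<close> by (intro positive_op_scaleR [OF positive_op_sqrt_id_minus]) simp
  have "bounded_clinear sqrt_id_minus"
    using positive_op_sqrt_id_minus by (simp add: positive_op_def)
  then have PP: "P (P x) = adj T (T x)" for x
    using \<open>0 < k\<close> by (simp add: P_def bounded_clinear_simps(5) sqrt_id_minus_square R_def)
  have unique: "Q = P" if Q: "positive_op Q" and QQ: "Q \<circ> Q = adj T \<circ> T" for Q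
  proof (rule positive_sqrt_unique_if_commute [OF Q P])
    have Q_clinear: "bounded_clinear Q"
      using Q by (simp add: positive_op_def)
    show QQ_PP: "Q (Q x) = P (P x)" for x
      using QQ by (simp add: PP fun_eq_iff)
    have "Q (R x) = R (Q x)" for x
      by (simp add: R_def bounded_clinear_simps [OF Q_clinear] flip: QQ_PP PP)
    then show "Q (P x) = P (Q x)" for x
      by (simp add: P_def bounded_clinear_simps [OF Q_clinear]
          commute_sqrt_id_minus [OF bounded_clinear_imp_bounded_linear [OF Q_clinear]])
  qed
  show ?thesis
  proof (rule ex1I [of _ P])
    show "positive_op P \<and> P \<circ> P = adj T \<circ> T"
      using P PP by (simp add: fun_eq_iff)
  qed (use unique in blast)
qed

lemma opabs_characterization:
  fixes T :: "'a::chilbert_space \<Rightarrow> 'a"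
  assumes "bounded_clinear T"
  shows "positive_op (opabs T) \<and> opabs T \<circ> opabs T = adj T \<circ> T"
  unfolding opabs_def by (rule theI' [OF ex1_positive_sqrt_adj_comp [OF assms]])

lemma positive_op_opabs:
  "bounded_clinear T \<Longrightarrow> positive_op (opabs (T::'a::chilbert_space \<Rightarrow> 'a))"
  using opabs_characterization by blast

lemma opabs_opabs:
  "bounded_clinear T \<Longrightarrow> opabs T (opabs T x) = adj T (T (x::'a::chilbert_space))"
  using opabs_characterization by (metis comp_apply)

section \<open>Operators with orthogonal moduli\<close>

lemma comp_adj_eq_zero_if_opabs_comp_eq_zero:
  fixes X Y :: "'a::chilbert_space \<Rightarrow> 'a"
  assumes X: "bounded_clinear X" and Y: "bounded_clinear Y"
    and XY: "opabs X \<circ> opabs Y = (\<lambda>_. 0)"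
  shows "X (adj Y v) = 0"
proof -
  have "adj X (X (opabs Y x)) = 0" for x
    using fun_cong [OF XY, of x] positive_op_opabs [OF X]
    by (simp add: positive_op_def bounded_clinear_simps flip: opabs_opabs [OF X])
  then have X_opabs_Y: "X (opabs Y x) = 0" for x
    by (metis cinner_adj_right [OF X] cinner_eq_zero_iff cinner_right.zero)
  have YX': "Y (adj X z) = 0" for z
  proof -
    have "cinner (Y (adj X z)) (Y (adj X z)) = cinner z (X (adj Y (Y (adj X z))))"
      by (simp add: cinner_adj_right [OF Y] cinner_adj_left [OF X])
    also have "\<dots> = 0"
      by (simp add: X_opabs_Y flip: opabs_opabs [OF Y])
    finally show ?thesis
      by (simp add: cinner_eq_zero_iff)
  qed
  have "cinner (X (adj Y v)) z = 0" for z
    by (simp add: cinner_adj_right [OF X] cinner_adj_left [OF Y] YX')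
  then show ?thesis
    using cinner_eq_zero_iff by blast
qed

lemma Re_cinner_adj_comp_add_comp_adj:
  fixes X Y :: "'a::chilbert_space \<Rightarrow> 'a"
  assumes X: "bounded_clinear X" and Y: "bounded_clinear Y"
  shows "Re (cinner (adj X (X x) + Y (adj Y x)) x) = (norm (X x))\<^sup>2 + (norm (adj Y x))\<^sup>2"
  by (simp add: cinner_add_left cinner_adj_left [OF X] cinner_adj_right [OF Y] Re_cinner_self)

lemma norm_adj_comp_add_comp_adj_le:
  fixes X Y :: "'a::chilbert_space \<Rightarrow> 'a"
  assumes X: "bounded_clinear X" and Y: "bounded_clinear Y" and XY: "\<And>v. X (Y v) = 0"
  shows "norm (adj X (X x) + Y (adj Y x)) \<le> (max (onorm X) (onorm Y))\<^sup>2 * norm x"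
proof -
  define m where "m = max (onorm X) (onorm Y)"
  have "0 \<le> m"
    by (simp add: m_def le_max_iff_disj onorm_nonneg_clinear [OF X])
  define F where "F = adj X (X x) + Y (adj Y x)"
  have "norm (adj X (X x)) \<le> onorm X * norm (X x)"
    using bounded_clinear_onorm [OF bounded_clinear_adj [OF X], of "X x"] by (simp add: onorm_adj [OF X])
  also have "\<dots> \<le> m * norm (X x)"
    by (simp add: m_def mult_right_mono)
  finally have "norm (adj X (X x)) \<le> m * norm (X x)" .
  then have X_bound: "(norm (adj X (X x)))\<^sup>2 \<le> (m * norm (X x))\<^sup>2"
    by (rule power_mono) simp
  have "norm (Y (adj Y x)) \<le> onorm Y * norm (adj Y x)"
    by (rule bounded_clinear_onorm [OF Y])
  also have "\<dots> \<le> m * norm (adj Y x)"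
    by (simp add: m_def mult_right_mono)
  finally have "norm (Y (adj Y x)) \<le> m * norm (adj Y x)" .
  then have Y_bound: "(norm (Y (adj Y x)))\<^sup>2 \<le> (m * norm (adj Y x))\<^sup>2"
    by (rule power_mono) simp
  \<comment> \<open>the two summands are orthogonal because \<open>X Y = 0\<close>\<close>
  have "(norm F)\<^sup>2 = (norm (adj X (X x)))\<^sup>2 + (norm (Y (adj Y x)))\<^sup>2"
    by (simp add: F_def power2_norm_add cinner_adj_left [OF X] XY)
  also have "\<dots> \<le> m\<^sup>2 * ((norm (X x))\<^sup>2 + (norm (adj Y x))\<^sup>2)"
    using add_mono [OF X_bound Y_bound] by (simp add: power_mult_distrib distrib_left)
  also have "\<dots> = m\<^sup>2 * Re (cinner F x)"
    by (simp add: F_def Re_cinner_adj_comp_add_comp_adj [OF X Y])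
  also have "\<dots> \<le> m\<^sup>2 * (norm F * norm x)"
    by (intro mult_left_mono order_trans [OF complex_Re_le_cmod norm_cinner_le]) simp_all
  finally have "(norm F)\<^sup>2 \<le> norm F * (m\<^sup>2 * norm x)"
    by (simp add: mult_ac)
  then have "norm F \<le> m\<^sup>2 * norm x"
    by (rule real_le_of_power2_le_mult) simp
  then show ?thesis
    by (simp add: F_def m_def)
qed

lemma power2_norm_add_power2_norm_adj_le:
  fixes X Y :: "'a::chilbert_space \<Rightarrow> 'a"
  assumes X: "bounded_clinear X" and Y: "bounded_clinear Y" and XY: "\<And>v. X (Y v) = 0"
  shows "(norm (X x))\<^sup>2 + (norm (adj Y x))\<^sup>2 \<le> (max (onorm X) (onorm Y))\<^sup>2 * (norm x)\<^sup>2"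
proof -
  have "(norm (X x))\<^sup>2 + (norm (adj Y x))\<^sup>2 \<le> norm (adj X (X x) + Y (adj Y x)) * norm x"
    unfolding Re_cinner_adj_comp_add_comp_adj [OF X Y, symmetric]
    using complex_Re_le_cmod norm_cinner_le by (rule order_trans)
  also have "\<dots> \<le> (max (onorm X) (onorm Y))\<^sup>2 * norm x * norm x"
    by (rule mult_right_mono [OF norm_adj_comp_add_comp_adj_le [OF X Y XY]]) simp
  finally show ?thesis
    by (simp add: power2_eq_square mult.assoc)
qed

lemma onorm_adj_comp_add_comp_adj:
  fixes X Y :: "'a::chilbert_space \<Rightarrow> 'a"
  assumes X: "bounded_clinear X" and Y: "bounded_clinear Y" and XY: "\<And>v. X (Y v) = 0"
  shows "onorm (\<lambda>x. adj X (X x) + Y (adj Y x)) = (max (onorm X) (onorm Y))\<^sup>2"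
proof (rule antisym)
  define F where "F x = adj X (X x) + Y (adj Y x)" for x
  have F: "bounded_clinear F"
    unfolding F_def using bounded_clinear_add [OF bounded_clinear_compose [OF bounded_clinear_adj [OF X] X]
        bounded_clinear_compose [OF Y bounded_clinear_adj [OF Y]]] .
  show "onorm F \<le> (max (onorm X) (onorm Y))\<^sup>2"
    by (rule onorm_bound) (simp_all add: F_def norm_adj_comp_add_comp_adj_le [OF X Y XY])
  have bound: "(norm (X x))\<^sup>2 + (norm (adj Y x))\<^sup>2 \<le> onorm F * (norm x)\<^sup>2" for x
  proof -
    have "(norm (X x))\<^sup>2 + (norm (adj Y x))\<^sup>2 \<le> norm (F x) * norm x"
      unfolding F_def Re_cinner_adj_comp_add_comp_adj [OF X Y, symmetric]
      using complex_Re_le_cmod norm_cinner_le by (rule order_trans)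
    also have "\<dots> \<le> onorm F * norm x * norm x"
      by (rule mult_right_mono [OF bounded_clinear_onorm [OF F]]) simp
    finally show ?thesis
      by (simp add: power2_eq_square mult.assoc)
  qed
  have "onorm X \<le> sqrt (onorm F)"
  proof (rule onorm_le_sqrt_if_power2_le [OF onorm_nonneg_clinear [OF F]])
    show "(norm (X x))\<^sup>2 \<le> onorm F * (norm x)\<^sup>2" for x
      using bound [of x] zero_le_power2 [of "norm (adj Y x)"] by linarith
  qed
  moreover have "onorm (adj Y) \<le> sqrt (onorm F)"
  proof (rule onorm_le_sqrt_if_power2_le [OF onorm_nonneg_clinear [OF F]])
    show "(norm (adj Y x))\<^sup>2 \<le> onorm F * (norm x)\<^sup>2" for x
      using bound [of x] zero_le_power2 [of "norm (X x)"] by linarith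
  qed
  ultimately have "max (onorm X) (onorm Y) \<le> sqrt (onorm F)"
    by (simp add: onorm_adj [OF Y])
  then have "(max (onorm X) (onorm Y))\<^sup>2 \<le> (sqrt (onorm F))\<^sup>2"
    by (rule power_mono) (simp add: le_max_iff_disj onorm_nonneg_clinear [OF X])
  then show "(max (onorm X) (onorm Y))\<^sup>2 \<le> onorm F"
    using onorm_nonneg_clinear [OF F] by simp
qed

section \<open>The numerical radius of an off-diagonal operator matrix\<close>

definition off_diagonal_values ::
    "('a::complex_inner \<Rightarrow> 'a) \<Rightarrow> ('a \<Rightarrow> 'a) \<Rightarrow> real set"
  where "off_diagonal_values B C =
    {cmod (cinner (B x2) x1 + cinner (C x1) x2) | x1 x2. (norm x1)\<^sup>2 + (norm x2)\<^sup>2 = 1}"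

lemma numrad2_off_diagonal_eq_Sup:
  "numrad2 (opmat2 (\<lambda>_. 0) B C (\<lambda>_. 0)) = Sup (insert 0 (off_diagonal_values B C))"
proof -
  have unit_sphere: "{x. dsum_norm x = 1} = {(x1, x2). (norm x1)\<^sup>2 + (norm x2)\<^sup>2 = 1}"
    by (auto simp: dsum_norm_def)
  have quadratic_form: "dsum_inner (opmat2 (\<lambda>_. 0) B C (\<lambda>_. 0) (x1, x2)) (x1, x2)
      = cinner (B x2) x1 + cinner (C x1) x2" for x1 x2
    by (simp add: opmat2_def dsum_inner_def)
  have "(\<lambda>x. cmod (dsum_inner (opmat2 (\<lambda>_. 0) B C (\<lambda>_. 0) x) x)) ` {x. dsum_norm x = 1}
      = off_diagonal_values B C"
    unfolding off_diagonal_values_def unit_sphere by (force simp: quadratic_form)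
  then show ?thesis
    by (simp add: numrad2_def)
qed

lemma off_diagonal_values_commute: "off_diagonal_values B C = off_diagonal_values C B"
  unfolding off_diagonal_values_def by (metis (no_types, opaque_lifting) add.commute)

lemma cmod_cinner_add_cmod_cinner_le:
  fixes u w x :: "'a::complex_inner"
  assumes uw: "cinner u w = 0"
  shows "cmod (cinner u x) + cmod (cinner w x) \<le> sqrt ((norm u)\<^sup>2 + (norm w)\<^sup>2) * norm x"
proof -
  define p where "p = cinner u x"
  define q where "q = cinner w x"
  \<comment> \<open>rotating \<open>u\<close> and \<open>w\<close> by the phases of \<open>p\<close> and \<open>q\<close> turns \<open>cmod p + cmod q\<close>
    into a single inner product\<close>
  define z where "z = scaleC (sgn p) u + scaleC (sgn q) w"
  have "cmod p + cmod q = cmod (cinner z x)"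
    by (simp add: z_def cinner_add_left cinner_scaleC_left p_def [symmetric] q_def [symmetric]
        cnj_sgn_mult flip: of_real_add)
  also have "\<dots> \<le> norm z * norm x"
    by (rule norm_cinner_le)
  also have "norm z \<le> sqrt ((norm u)\<^sup>2 + (norm w)\<^sup>2)"
  proof (rule real_le_rsqrt)
    have "(norm z)\<^sup>2 = (cmod (sgn p) * norm u)\<^sup>2 + (cmod (sgn q) * norm w)\<^sup>2"
      by (simp add: z_def power2_norm_add norm_scaleC cinner_scaleC_left cinner_scaleC_right uw)
    also have "\<dots> \<le> (norm u)\<^sup>2 + (norm w)\<^sup>2"
      by (intro add_mono) (auto simp: norm_sgn power_mult_distrib)
    finally show "(norm z)\<^sup>2 \<le> (norm u)\<^sup>2 + (norm w)\<^sup>2" .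
  qed
  finally show ?thesis
    by (simp add: p_def q_def mult_right_mono)
qed

lemma off_diagonal_value_le:
  fixes B C :: "'a::chilbert_space \<Rightarrow> 'a"
  assumes B: "bounded_clinear B" and C: "bounded_clinear C"
    and BC: "\<And>v. B (C v) = 0" and CB: "\<And>v. C (B v) = 0"
    and x: "(norm x1)\<^sup>2 + (norm x2)\<^sup>2 = 1"
  shows "cmod (cinner (B x2) x1 + cinner (C x1) x2) \<le> max (onorm B) (onorm C) / 2"
proof -
  define m where "m = max (onorm B) (onorm C)"
  have "0 \<le> m"
    by (simp add: m_def le_max_iff_disj onorm_nonneg_clinear [OF B])
  have "cinner (B x2) (adj C x2) = 0"
    by (simp flip: cinner_adj_right [OF C]) (simp add: CB)
  have "cmod (cinner (B x2) x1 + cinner (C x1) x2)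
      \<le> cmod (cinner (B x2) x1) + cmod (cinner (adj C x2) x1)"
    using norm_triangle_ineq [of "cinner (B x2) x1" "cnj (cinner (adj C x2) x1)"]
    by (simp add: cinner_adj_right [OF C] cinner_commute [of x1])
  also have "\<dots> \<le> sqrt ((norm (B x2))\<^sup>2 + (norm (adj C x2))\<^sup>2) * norm x1"
    by (rule cmod_cinner_add_cmod_cinner_le) fact
  also have "\<dots> \<le> m * norm x2 * norm x1"
  proof (rule mult_right_mono [OF real_le_lsqrt])
    show "(norm (B x2))\<^sup>2 + (norm (adj C x2))\<^sup>2 \<le> (m * norm x2)\<^sup>2"
      using power2_norm_add_power2_norm_adj_le [OF B C BC, of x2] by (simp add: m_def power_mult_distrib)
  qed (simp_all add: \<open>0 \<le> m\<close>)
  also have "\<dots> \<le> m * (1 / 2)"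
    unfolding mult.assoc
  proof (rule mult_left_mono [OF _ \<open>0 \<le> m\<close>])
    have "0 \<le> (norm x1 - norm x2)\<^sup>2"
      by simp
    with x show "norm x2 * norm x1 \<le> 1 / 2"
      by (simp add: power2_eq_square algebra_simps)
  qed
  finally show ?thesis
    by (simp add: m_def)
qed

lemma norm_ratio_mem_off_diagonal_values:
  fixes B C :: "'a::chilbert_space \<Rightarrow> 'a"
  assumes B: "bounded_clinear B" and C: "bounded_clinear C"
    and CB: "\<And>v. C (B v) = 0" and Bx: "B x \<noteq> 0"
  shows "norm (B x) / (2 * norm x) \<in> off_diagonal_values B C"
proof -
  have "x \<noteq> 0"
    using Bx bounded_clinear_simps(3) [OF B] by auto
  define a where "a = 1 / (sqrt 2 * norm x)"
  define b where "b = 1 / (sqrt 2 * norm (B x))"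
  have unit: "(norm (b *\<^sub>R B x))\<^sup>2 + (norm (a *\<^sub>R x))\<^sup>2 = 1"
    using Bx \<open>x \<noteq> 0\<close> by (simp add: a_def b_def power_mult_distrib power_divide)
  have "cinner (B (a *\<^sub>R x)) (b *\<^sub>R B x) + cinner (C (b *\<^sub>R B x)) (a *\<^sub>R x)
      = of_real (a * b * (norm (B x))\<^sup>2)"
    by (simp add: bounded_clinear_simps(5) [OF B] bounded_clinear_simps(5) [OF C] CB
        cinner_scaleR_left cinner_scaleR_right cinner_self)
  also have "a * b * (norm (B x))\<^sup>2 = norm (B x) / (2 * norm x)"
    using Bx \<open>x \<noteq> 0\<close> by (simp add: a_def b_def power2_eq_square)
  finally have "norm (B x) / (2 * norm x)
      = cmod (cinner (B (a *\<^sub>R x)) (b *\<^sub>R B x) + cinner (C (b *\<^sub>R B x)) (a *\<^sub>R x))"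
    by (simp only: norm_of_real) simp
  with unit show ?thesis
    unfolding off_diagonal_values_def by blast
qed

lemma numrad2_off_diagonal:
  fixes B C :: "'a::chilbert_space \<Rightarrow> 'a"
  assumes B: "bounded_clinear B" and C: "bounded_clinear C"
    and BC: "\<And>v. B (C v) = 0" and CB: "\<And>v. C (B v) = 0"
  shows "numrad2 (opmat2 (\<lambda>_. 0) B C (\<lambda>_. 0)) = max (onorm B) (onorm C) / 2"
proof -
  define m where "m = max (onorm B) (onorm C)"
  define W where "W = insert 0 (off_diagonal_values B C)"
  have "0 \<le> m"
    by (simp add: m_def le_max_iff_disj onorm_nonneg_clinear [OF B])
  have W_le: "w \<le> m / 2" if "w \<in> W" for w
    using that \<open>0 \<le> m\<close> off_diagonal_value_le [OF B C BC CB]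
    by (auto simp: W_def off_diagonal_values_def m_def)
  then have "bdd_above W"
    by (rule bdd_aboveI)
  have "Sup W \<le> m / 2"
    using W_le by (intro cSup_least) (auto simp: W_def)
  moreover have "0 \<le> Sup W"
    using \<open>bdd_above W\<close> by (intro cSup_upper) (simp_all add: W_def)
  have norm_le: "norm (F x) \<le> 2 * Sup W * norm x"
    if "bounded_clinear F" "\<And>x. norm (F x) / (2 * norm x) \<in> off_diagonal_values B C \<or> F x = 0"
    for F x
  proof (cases "F x = 0")
    case False
    then have "x \<noteq> 0"
      using bounded_clinear_simps(3) [OF that(1)] by auto
    have "norm (F x) / (2 * norm x) \<le> Sup W"
      using that(2) [of x] False \<open>bdd_above W\<close> by (intro cSup_upper) (auto simp: W_def)
    with \<open>x \<noteq> 0\<close> show ?thesis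
      by (simp add: field_simps)
  qed (simp add: \<open>0 \<le> Sup W\<close>)
  have "onorm B \<le> 2 * Sup W"
    using \<open>0 \<le> Sup W\<close> norm_le [OF B] norm_ratio_mem_off_diagonal_values [OF B C CB]
    by (intro onorm_bound) auto
  moreover have "onorm C \<le> 2 * Sup W"
    using \<open>0 \<le> Sup W\<close> norm_le [OF C] norm_ratio_mem_off_diagonal_values [OF C B BC]
    by (intro onorm_bound) (auto simp: off_diagonal_values_commute)
  ultimately have "Sup W = m / 2"
    by (simp add: m_def)
  then show ?thesis
    by (simp add: numrad2_off_diagonal_eq_Sup W_def m_def)
qed

theorem mainTheorem7:
  fixes B C :: "'a::chilbert_space \<Rightarrow> 'a"
  assumes "bounded_clinear B" and "bounded_clinear C"
    and "opabs B \<circ> opabs (adj C) = (\<lambda>_. 0)"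
    and "opabs (adj B) \<circ> opabs C = (\<lambda>_. 0)"
  shows "(numrad2 (opmat2 (\<lambda>_. 0) B C (\<lambda>_. 0)))\<^sup>2 =
           1/4 * max (onorm (\<lambda>x. opabs B (opabs B x) + opabs (adj C) (opabs (adj C) x)))
                     (onorm (\<lambda>x. opabs (adj B) (opabs (adj B) x) + opabs C (opabs C x)))"
proof -
  note B = assms(1) and C = assms(2)
  have B': "bounded_clinear (adj B)" and C': "bounded_clinear (adj C)"
    using B C by (simp_all add: bounded_clinear_adj)
  have BC: "B (C v) = 0" for v
    using comp_adj_eq_zero_if_opabs_comp_eq_zero [OF B C' assms(3), of v] by (simp add: adj_adj [OF C])
  have B'C': "adj B (adj C v) = 0" for v
    using comp_adj_eq_zero_if_opabs_comp_eq_zero [OF B' C assms(4)] .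
  have CB: "C (B v) = 0" for v
    using cinner_ext_left [of "C (B v)" 0]
    by (simp add: cinner_adj_right [OF C] cinner_adj_right [OF B] B'C')
  have "onorm (\<lambda>x. opabs B (opabs B x) + opabs (adj C) (opabs (adj C) x))
      = (max (onorm B) (onorm C))\<^sup>2"
    using onorm_adj_comp_add_comp_adj [OF B C BC]
    by (simp add: opabs_opabs [OF B] opabs_opabs [OF C'] adj_adj [OF C])
  moreover have "onorm (\<lambda>x. opabs (adj B) (opabs (adj B) x) + opabs C (opabs C x))
      = (max (onorm B) (onorm C))\<^sup>2"
    using onorm_adj_comp_add_comp_adj [OF B' C' B'C']
    by (simp add: opabs_opabs [OF B'] opabs_opabs [OF C] adj_adj [OF B] adj_adj [OF C]
        onorm_adj [OF B] onorm_adj [OF C])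
  ultimately show ?thesis
    by (simp add: numrad2_off_diagonal [OF B C BC CB] power_divide)
qed

end
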